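(* Let $G$ be a search game (as defined in the context) whose payoffs are ordinally consistent and solitary-search dominant, in which social value outweighs cost, and which admits a redundancy-free pure strategy profile. Then $G$ admits a pure Nash equilibrium $s$ that is cost-inclusive socially optimal, i.e., $U_{CI}(s)=\max_{s'\in S}U_{CI}(s')$.
   Context: A search game $G=(N,\Omega,\Pi,\mu,K,c,v)$ consists of: a finite set of players $N=\{1,\ldots,n\}$; a finite set $\Omega$ of locations; for each player $i$ a partition $\Pi_i$ of $\Omega$, with $\pi_i(\omega)$ the cell containing $\omega$; a common prior $\mu\in\Delta(\Omega)$ with $\mu(\pi_i)>0$ for every cell of every player, and $\mu(\omega|\pi_i)=\mu(\omega)/\mu(\pi_i)$ for $\omega\in\pi_i$; capacities $K_i\in\mathbb{N}$; costs $c_i:\{0,\ldots,K_i\}\to\mathbb{R}_{\ge0}$ with $c_i(0)=0$ and nondecreasing increments $c_i(k+1)-c_i(k)\ge c_i(k)-c_i(k-1)$; rewards $v_i^m(\omega)\ge0$ with $v_i^{m+1}(\omega)\le v_i^m(\omega)$; social values $v_{\mathfrak{s}}(\omega)\ge0$. A pure strategy $s_i$ assigns to each cell $\pi_i$ a subset $s_i(\pi_i)\subseteq\pi_i$ of size at most $K_i$; $S$ is the set of pure profiles. With $m_s(\omega)=\sum_{i}\mathbf{1}_{\omega\in s_i(\pi_i(\omega))}$, player $i$'s payoff is $u_i(s)=\sum_{\omega}\mu(\omega)\big[\mathbf{1}_{\omega\in s_i(\pi_i(\omega))}v_i^{m_s(\omega)}(\omega)-c_i(|s_i(\pi_i(\omega))|)\big]$;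 a pure Nash equilibrium is a pure profile from which no player gains by a unilateral deviation to another pure strategy. The cost-inclusive social payoff is $U_{CI}(s)=\sum_{\omega}\mu(\omega)\big[v_{\mathfrak{s}}(\omega)\mathbf{1}_{m_s(\omega)\ge1}-\sum_{i\in N}c_i(|s_i(\pi_i(\omega))|)\big]$. Payoffs are ordinally consistent if for every player $i$, cell $\pi_i$ and $\omega,\omega'\in\pi_i$: $\mu(\omega)v_i^1(\omega)<\mu(\omega')v_i^1(\omega')$ implies $\mu(\omega)v_{\mathfrak{s}}(\omega)\le\mu(\omega')v_{\mathfrak{s}}(\omega')$. Payoffs are solitary-search dominant if for every player $i$, cell $\pi_i$ and $\omega,\omega'\in\pi_i$: $\mu(\omega|\pi_i)v_i^1(\omega)\ge\mu(\omega'|\pi_i)v_i^2(\omega')$ and $\mu(\omega|\pi_i)v_i^1(\omega)\ge c_i(K_i)-c_i(K_i-1)$. Social value outweighs cost if $\mu(\omega)v_{\mathfrak{s}}(\omega)\ge\mu(\pi_i)\big(c_i(K_i)-c_i(K_i-1)\big)$ for every location $\omega$, player $i$ and cell $\pi_i\in\Pi_i$. A pure profile $s$ is redundancy-free if $|s_i(\pi_i)|=K_i$ for every cell $\pi_i$ of every player $i$, and $m_s(\omega)\le1$ for every $\omega\in\Omega$. *)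

theory Defs
  imports Complex_Main "HOL-Library.Disjoint_Sets"
begin

text \<open>P i is player i's partition of Om, mu the prior, K the capacities, c the costs,
  v i m w the reward v_i^m(w), vs the social value.  A pure profile is a function
  s :: 'p => 'w set => 'w set, where s i C is the set searched by i in cell C.\<close>

definition cell :: "('p \<Rightarrow> 'w set set) \<Rightarrow> 'p \<Rightarrow> 'w \<Rightarrow> 'w set" where
  "cell P i w = (THE C. C \<in> P i \<and> w \<in> C)"

definition cell_mass :: "('w \<Rightarrow> real) \<Rightarrow> 'w set \<Rightarrow> real" where
  "cell_mass mu C = (\<Sum>w\<in>C. mu w)"

definition search_game ::
  "'p set \<Rightarrow> 'w set \<Rightarrow> ('p \<Rightarrow> 'w set set) \<Rightarrow> ('w \<Rightarrow> real) \<Rightarrow> ('p \<Rightarrow> nat)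
   \<Rightarrow> ('p \<Rightarrow> nat \<Rightarrow> real) \<Rightarrow> ('p \<Rightarrow> nat \<Rightarrow> 'w \<Rightarrow> real) \<Rightarrow> ('w \<Rightarrow> real) \<Rightarrow> bool" where
  "search_game N Om P mu K c v vs \<longleftrightarrow>
     finite N \<and> N \<noteq> {} \<and> finite Om \<and>
     (\<forall>i\<in>N. partition_on Om (P i)) \<and>
     (\<forall>w\<in>Om. mu w \<ge> 0) \<and> (\<Sum>w\<in>Om. mu w) = 1 \<and>
     (\<forall>i\<in>N. \<forall>C\<in>P i. cell_mass mu C > 0) \<and>
     (\<forall>i\<in>N. K i \<ge> 1) \<and>
     (\<forall>i\<in>N. c i 0 = 0 \<and> (\<forall>k\<le>K i. c i k \<ge> 0) \<and>
        (\<forall>k. 1 \<le> k \<and> k < K i \<longrightarrow> c i (k + 1) - c i k \<ge> c i k - c i (k - 1))) \<and>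
     (\<forall>i\<in>N. \<forall>w\<in>Om. \<forall>m. 1 \<le> m \<and> m \<le> card N \<longrightarrow> v i m w \<ge> 0) \<and>
     (\<forall>i\<in>N. \<forall>w\<in>Om. \<forall>m. 1 \<le> m \<and> m < card N \<longrightarrow> v i (m + 1) w \<le> v i m w) \<and>
     (\<forall>w\<in>Om. vs w \<ge> 0)"

definition pure_strategy :: "('p \<Rightarrow> 'w set set) \<Rightarrow> ('p \<Rightarrow> nat) \<Rightarrow> 'p \<Rightarrow> ('w set \<Rightarrow> 'w set) \<Rightarrow> bool" where
  "pure_strategy P K i t \<longleftrightarrow>
     (\<forall>C\<in>P i. t C \<subseteq> C \<and> card (t C) \<le> K i) \<and> (\<forall>C. C \<notin> P i \<longrightarrow> t C = {})"

definition pure_profiles :: "'p set \<Rightarrow> ('p \<Rightarrow> 'w set set) \<Rightarrow> ('p \<Rightarrow> nat) \<Rightarrow> ('p \<Rightarrow> 'w set \<Rightarrow> 'w set) set" where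
  "pure_profiles N P K = {s. (\<forall>i\<in>N. pure_strategy P K i (s i)) \<and> (\<forall>i. i \<notin> N \<longrightarrow> s i = (\<lambda>_. {}))}"

definition searches :: "('p \<Rightarrow> 'w set set) \<Rightarrow> ('p \<Rightarrow> 'w set \<Rightarrow> 'w set) \<Rightarrow> 'p \<Rightarrow> 'w \<Rightarrow> bool" where
  "searches P s i w \<longleftrightarrow> w \<in> s i (cell P i w)"

definition num_searchers :: "'p set \<Rightarrow> ('p \<Rightarrow> 'w set set) \<Rightarrow> ('p \<Rightarrow> 'w set \<Rightarrow> 'w set) \<Rightarrow> 'w \<Rightarrow> nat" where
  "num_searchers N P s w = card {i\<in>N. searches P s i w}"

definition payoff ::
  "'p set \<Rightarrow> 'w set \<Rightarrow> ('p \<Rightarrow> 'w set set) \<Rightarrow> ('w \<Rightarrow> real) \<Rightarrow> ('p \<Rightarrow> nat \<Rightarrow> real)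
   \<Rightarrow> ('p \<Rightarrow> nat \<Rightarrow> 'w \<Rightarrow> real) \<Rightarrow> 'p \<Rightarrow> ('p \<Rightarrow> 'w set \<Rightarrow> 'w set) \<Rightarrow> real" where
  "payoff N Om P mu c v i s =
     (\<Sum>w\<in>Om. mu w * ((if searches P s i w then v i (num_searchers N P s w) w else 0)
                       - c i (card (s i (cell P i w)))))"

definition pure_nash ::
  "'p set \<Rightarrow> 'w set \<Rightarrow> ('p \<Rightarrow> 'w set set) \<Rightarrow> ('w \<Rightarrow> real) \<Rightarrow> ('p \<Rightarrow> nat) \<Rightarrow> ('p \<Rightarrow> nat \<Rightarrow> real)
   \<Rightarrow> ('p \<Rightarrow> nat \<Rightarrow> 'w \<Rightarrow> real) \<Rightarrow> ('p \<Rightarrow> 'w set \<Rightarrow> 'w set) \<Rightarrow> bool" where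
  "pure_nash N Om P mu K c v s \<longleftrightarrow>
     s \<in> pure_profiles N P K \<and>
     (\<forall>i\<in>N. \<forall>t. pure_strategy P K i t \<longrightarrow> payoff N Om P mu c v i (s(i := t)) \<le> payoff N Om P mu c v i s)"

definition U_CI ::
  "'p set \<Rightarrow> 'w set \<Rightarrow> ('p \<Rightarrow> 'w set set) \<Rightarrow> ('w \<Rightarrow> real) \<Rightarrow> ('p \<Rightarrow> nat \<Rightarrow> real)
   \<Rightarrow> ('w \<Rightarrow> real) \<Rightarrow> ('p \<Rightarrow> 'w set \<Rightarrow> 'w set) \<Rightarrow> real" where
  "U_CI N Om P mu c vs s =
     (\<Sum>w\<in>Om. mu w * ((if num_searchers N P s w \<ge> 1 then vs w else 0)
                       - (\<Sum>i\<in>N. c i (card (s i (cell P i w))))))"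

definition ordinally_consistent ::
  "'p set \<Rightarrow> ('p \<Rightarrow> 'w set set) \<Rightarrow> ('w \<Rightarrow> real) \<Rightarrow> ('p \<Rightarrow> nat \<Rightarrow> 'w \<Rightarrow> real) \<Rightarrow> ('w \<Rightarrow> real) \<Rightarrow> bool" where
  "ordinally_consistent N P mu v vs \<longleftrightarrow>
     (\<forall>i\<in>N. \<forall>C\<in>P i. \<forall>w\<in>C. \<forall>w'\<in>C.
        mu w * v i 1 w < mu w' * v i 1 w' \<longrightarrow> mu w * vs w \<le> mu w' * vs w')"

definition solitary_search_dominant ::
  "'p set \<Rightarrow> ('p \<Rightarrow> 'w set set) \<Rightarrow> ('w \<Rightarrow> real) \<Rightarrow> ('p \<Rightarrow> nat) \<Rightarrow> ('p \<Rightarrow> nat \<Rightarrow> real)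
   \<Rightarrow> ('p \<Rightarrow> nat \<Rightarrow> 'w \<Rightarrow> real) \<Rightarrow> bool" where
  "solitary_search_dominant N P mu K c v \<longleftrightarrow>
     (\<forall>i\<in>N. \<forall>C\<in>P i. \<forall>w\<in>C. \<forall>w'\<in>C.
        mu w / cell_mass mu C * v i 1 w \<ge> mu w' / cell_mass mu C * v i 2 w' \<and>
        mu w / cell_mass mu C * v i 1 w \<ge> c i (K i) - c i (K i - 1))"

definition social_value_outweighs_cost ::
  "'p set \<Rightarrow> 'w set \<Rightarrow> ('p \<Rightarrow> 'w set set) \<Rightarrow> ('w \<Rightarrow> real) \<Rightarrow> ('p \<Rightarrow> nat) \<Rightarrow> ('p \<Rightarrow> nat \<Rightarrow> real)
   \<Rightarrow> ('w \<Rightarrow> real) \<Rightarrow> bool" where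
  "social_value_outweighs_cost N Om P mu K c vs \<longleftrightarrow>
     (\<forall>w\<in>Om. \<forall>i\<in>N. \<forall>C\<in>P i. mu w * vs w \<ge> cell_mass mu C * (c i (K i) - c i (K i - 1)))"

definition redundancy_free ::
  "'p set \<Rightarrow> 'w set \<Rightarrow> ('p \<Rightarrow> 'w set set) \<Rightarrow> ('p \<Rightarrow> nat) \<Rightarrow> ('p \<Rightarrow> 'w set \<Rightarrow> 'w set) \<Rightarrow> bool" where
  "redundancy_free N Om P K s \<longleftrightarrow>
     s \<in> pure_profiles N P K \<and>
     (\<forall>i\<in>N. \<forall>C\<in>P i. card (s i C) = K i) \<and>
     (\<forall>w\<in>Om. num_searchers N P s w \<le> 1)"

end

theory Submission
  imports Defs "HOL-Library.Product_Lexorder"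
begin

text \<open>
  Every profile is weakly dominated in cost-inclusive welfare by a redundancy-free one: dropping
  a duplicate search saves cost and loses no coverage, and a cell with spare capacity can be
  filled by handing searches over along a redundancy-free reference profile until a new location
  is covered, whose social value outweighs the marginal cost (at most the last one, by
  convexity).  So a redundancy-free profile maximising welfare, with ties broken by the total
  solitary value \<open>\<Sum> \<mu>(\<omega>) v\<^sub>i\<^sup>1(\<omega>)\<close> of its searches, is socially optimal.
  Swapping a searched location for an uncovered one in the same cell keeps it redundancy-free
  and, by ordinal consistency, does not lower welfare; hence it cannot raise the solitary value,
  i.e. no uncovered location is solitarily worth more than a searched one.  Solitary-search
  dominance then bounds whatever a deviating player could gain, alone or sharing with one other
  searcher, by what it gives up, and covers its marginal cost.
\<close>


context
  fixes f :: "nat \<Rightarrow> real" and n :: nat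
  assumes increments_mono: "\<And>k. 0 < k \<Longrightarrow> k < n \<Longrightarrow> f k - f (k - 1) \<le> f (Suc k) - f k"
begin

lemma increment_le_increment:
  assumes "j \<le> k" "k < n"
  shows "f (Suc j) - f j \<le> f (Suc k) - f k"
  using assms
proof (induction k)
  case (Suc k)
  show ?case
  proof (cases "j = Suc k")
    case False
    then have "f (Suc j) - f j \<le> f (Suc k) - f k" using Suc by simp
    also have "\<dots> \<le> f (Suc (Suc k)) - f (Suc k)" using increments_mono[of "Suc k"] Suc.prems by simp
    finally show ?thesis .
  qed simp
qed simp

lemma increment_le_last: "k < n \<Longrightarrow> f (Suc k) - f k \<le> f n - f (n - 1)"
  using increment_le_increment[of k "n - 1"] by simp

lemma increment_nonneg: "f 0 \<le> f 1 \<Longrightarrow> k < n \<Longrightarrow> 0 \<le> f (Suc k) - f k"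
  using increment_le_increment[of 0 k] by simp

lemma diff_le_last_increment:
  assumes "k \<le> n"
  shows "f n - f k \<le> real (n - k) * (f n - f (n - 1))"
proof -
  have "f n - f k = (\<Sum>j = k..<n. f (Suc j) - f j)" using sum_Suc_diff'[OF assms, where f = f] by simp
  also have "\<dots> \<le> (\<Sum>j = k..<n. f n - f (n - 1))" by (intro sum_mono increment_le_last) simp
  finally show ?thesis by simp
qed

end

lemma exchange_sum_le:
  fixes a b :: "'a \<Rightarrow> real"
  assumes fin: "finite S" "finite T" and card_le: "card T \<le> card S"
    and common: "\<And>y. y \<in> T \<inter> S \<Longrightarrow> a y = b y"
    and new_le_old: "\<And>x y. x \<in> S \<Longrightarrow> y \<in> T - S \<Longrightarrow> a y \<le> b x"
    and old_ge: "\<And>x. x \<in> S \<Longrightarrow> d \<le> b x"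
    and cost: "cS - cT \<le> real (card S - card T) * d"
  shows "sum a T - cT \<le> sum b S - cS"
proof -
  have "card (T - S) \<le> card (S - T)"
    using fin card_le by (simp add: card_Diff_subset_Int Int_commute)
  then obtain g where g: "inj_on g (T - S)" "g ` (T - S) \<subseteq> S - T"
    using card_le_inj fin by (meson finite_Diff)
  define R where "R = (S - T) - g ` (T - S)"
  have "card R = card (S - T) - card (T - S)"
    using g fin by (simp add: R_def card_Diff_subset card_image)
  also have "\<dots> = card S - card T"
    using fin card_le card_mono[OF fin(2), of "S \<inter> T"] by (simp add: card_Diff_subset_Int Int_commute)
  finally have card_R: "card R = card S - card T" .
  have "sum a (T - S) \<le> sum b (g ` (T - S))"
    using g new_le_old by (simp add: sum.reindex) (intro sum_mono, auto)
  moreover have "real (card S - card T) * d \<le> sum b R"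
    using old_ge sum_bounded_below[of R d b] card_R by (auto simp: R_def)
  moreover have "sum b S = sum b (S \<inter> T) + sum b (g ` (T - S)) + sum b R"
    using fin g by (simp add: R_def sum.subset_diff[of "g ` (T - S)" "S - T"] sum.Int_Diff[of S b T])
  moreover have "sum a T = sum b (S \<inter> T) + sum a (T - S)"
    using fin common by (simp add: sum.Int_Diff[of T a S] Int_commute)
  ultimately show ?thesis using cost by linarith
qed

locale search_game_context =
  fixes N :: "'p set" and Om :: "'w set" and P :: "'p \<Rightarrow> 'w set set"
    and mu :: "'w \<Rightarrow> real" and K :: "'p \<Rightarrow> nat" and c :: "'p \<Rightarrow> nat \<Rightarrow> real"
    and v :: "'p \<Rightarrow> nat \<Rightarrow> 'w \<Rightarrow> real" and vs :: "'w \<Rightarrow> real"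
  assumes search_game: "search_game N Om P mu K c v vs"
begin

lemma finite_players: "finite N"
  and finite_locations: "finite Om"
  and partition: "i \<in> N \<Longrightarrow> partition_on Om (P i)"
  and cell_mass_pos: "i \<in> N \<Longrightarrow> C \<in> P i \<Longrightarrow> cell_mass mu C > 0"
  and cost_zero: "i \<in> N \<Longrightarrow> c i 0 = 0"
  and cost_nonneg: "i \<in> N \<Longrightarrow> k \<le> K i \<Longrightarrow> c i k \<ge> 0"
  and cost_increments_mono:
    "i \<in> N \<Longrightarrow> 0 < k \<Longrightarrow> k < K i \<Longrightarrow> c i k - c i (k - 1) \<le> c i (Suc k) - c i k"
  using search_game by (auto simp: search_game_def)

lemma cost_mono:
  assumes "i \<in> N" "0 < k" "k \<le> K i"
  shows "c i (k - 1) \<le> c i k"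
proof -
  have "0 \<le> c i (Suc (k - 1)) - c i (k - 1)"
    using assms cost_zero cost_nonneg[of i 1]
    by (intro increment_nonneg[OF cost_increments_mono[OF assms(1)]]) auto
  then show ?thesis using assms(2) by simp
qed

lemma marginal_cost_le_last:
  assumes "i \<in> N" "k < K i"
  shows "c i (Suc k) - c i k \<le> c i (K i) - c i (K i - 1)"
  using increment_le_last[OF cost_increments_mono[OF assms(1)] assms(2)] .

lemma cost_diff_le_last_marginal:
  assumes "i \<in> N" "k \<le> K i"
  shows "c i (K i) - c i k \<le> real (K i - k) * (c i (K i) - c i (K i - 1))"
  using diff_le_last_increment[OF cost_increments_mono[OF assms(1)] assms(2)] .

lemma cell_subset: "i \<in> N \<Longrightarrow> C \<in> P i \<Longrightarrow> C \<subseteq> Om"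
  using partition partition_onD1 by fastforce

lemma finite_cell: "i \<in> N \<Longrightarrow> C \<in> P i \<Longrightarrow> finite C"
  using cell_subset finite_locations finite_subset by blast

lemma finite_partition: "i \<in> N \<Longrightarrow> finite (P i)"
  using finite_elements[OF finite_locations partition] .

lemma cell_eqI:
  assumes "i \<in> N" "C \<in> P i" "w \<in> C"
  shows "cell P i w = C"
  unfolding cell_def
proof (rule the_equality)
  fix D assume "D \<in> P i \<and> w \<in> D"
  then show "D = C" using partition[OF assms(1)] assms by (auto dest: partition_onD2 disjointD)
qed (use assms in simp)

lemma cell_in_partition: "i \<in> N \<Longrightarrow> w \<in> Om \<Longrightarrow> cell P i w \<in> P i"
  and mem_cell: "i \<in> N \<Longrightarrow> w \<in> Om \<Longrightarrow> w \<in> cell P i w"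
  using partition partition_onD1[of Om] cell_eqI by (metis UnionE)+

lemma cell_eq_iff: "i \<in> N \<Longrightarrow> C \<in> P i \<Longrightarrow> w \<in> Om \<Longrightarrow> cell P i w = C \<longleftrightarrow> w \<in> C"
  using cell_eqI mem_cell by blast

lemma searches_iff: "i \<in> N \<Longrightarrow> C \<in> P i \<Longrightarrow> w \<in> C \<Longrightarrow> searches P s i w \<longleftrightarrow> w \<in> s i C"
  by (simp add: searches_def cell_eqI)

lemma sum_over_cells: "i \<in> N \<Longrightarrow> (\<Sum>w\<in>Om. f w) = (\<Sum>C\<in>P i. \<Sum>w\<in>C. f w)"
  using sum.partition[OF finite_locations partition] .

definition player_cells :: "('p \<times> 'w set) set" where
  "player_cells = (SIGMA i:N. P i)"

lemma finite_player_cells: "finite player_cells"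
  unfolding player_cells_def
  using finite_players finite_partition by auto

abbreviation profiles :: "('p \<Rightarrow> 'w set \<Rightarrow> 'w set) set" where
  "profiles \<equiv> pure_profiles N P K"

lemma profile_subset: "s \<in> profiles \<Longrightarrow> i \<in> N \<Longrightarrow> C \<in> P i \<Longrightarrow> s i C \<subseteq> C"
  and profile_card_le: "s \<in> profiles \<Longrightarrow> i \<in> N \<Longrightarrow> C \<in> P i \<Longrightarrow> card (s i C) \<le> K i"
  by (simp_all add: pure_profiles_def pure_strategy_def)

lemma finite_profile: "s \<in> profiles \<Longrightarrow> i \<in> N \<Longrightarrow> C \<in> P i \<Longrightarrow> finite (s i C)"
  using finite_subset[OF profile_subset finite_cell] .

lemma update_profile:
  "s \<in> profiles \<Longrightarrow> i \<in> N \<Longrightarrow> C \<in> P i \<Longrightarrow> X \<subseteq> C \<Longrightarrow> card X \<le> K i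
   \<Longrightarrow> s(i := (s i)(C := X)) \<in> profiles"
  by (auto simp: pure_profiles_def pure_strategy_def)

lemma finite_profiles: "finite profiles"
proof -
  define F where "F = {f. \<forall>C. (C \<in> Pow Om \<longrightarrow> f C \<in> Pow Om) \<and> (C \<notin> Pow Om \<longrightarrow> f C = {})}"
  have "finite F"
    unfolding F_def using finite_locations by (intro finite_set_of_finite_funs) auto
  then have "finite {s. \<forall>i. (i \<in> N \<longrightarrow> s i \<in> F) \<and> (i \<notin> N \<longrightarrow> s i = (\<lambda>_. {}))}"
    using finite_players by (intro finite_set_of_finite_funs)
  moreover have "profiles \<subseteq> {s. \<forall>i. (i \<in> N \<longrightarrow> s i \<in> F) \<and> (i \<notin> N \<longrightarrow> s i = (\<lambda>_. {}))}"
    using cell_subset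
    by (fastforce simp: F_def pure_profiles_def pure_strategy_def)
  ultimately show ?thesis by (rule finite_subset[rotated])
qed

definition search_pairs :: "('p \<Rightarrow> 'w set \<Rightarrow> 'w set) \<Rightarrow> ('p \<times> 'w) set" where
  "search_pairs s = {(j, w) \<in> N \<times> Om. searches P s j w}"

definition covered :: "('p \<Rightarrow> 'w set \<Rightarrow> 'w set) \<Rightarrow> 'w set" where
  "covered s = snd ` search_pairs s"

definition nonredundant :: "('p \<Rightarrow> 'w set \<Rightarrow> 'w set) \<Rightarrow> bool" where
  "nonredundant s \<longleftrightarrow> inj_on snd (search_pairs s)"

definition search_cost :: "('p \<Rightarrow> 'w set \<Rightarrow> 'w set) \<Rightarrow> real" where
  "search_cost s = (\<Sum>(j, D)\<in>player_cells. cell_mass mu D * c j (card (s j D)))"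

abbreviation welfare :: "('p \<Rightarrow> 'w set \<Rightarrow> 'w set) \<Rightarrow> real" where
  "welfare \<equiv> U_CI N Om P mu c vs"

lemma finite_search_pairs: "finite (search_pairs s)"
  using finite_players finite_locations
  by (auto simp: search_pairs_def intro: finite_subset[of _ "N \<times> Om"])

lemma mem_search_pairs_iff:
  "(j, w) \<in> search_pairs s \<longleftrightarrow> j \<in> N \<and> w \<in> Om \<and> w \<in> s j (cell P j w)"
  by (simp add: search_pairs_def searches_def)

lemma mem_search_pairs_cell:
  "i \<in> N \<Longrightarrow> C \<in> P i \<Longrightarrow> w \<in> C \<Longrightarrow> (i, w) \<in> search_pairs s \<longleftrightarrow> w \<in> s i C"
  using cell_subset by (auto simp: search_pairs_def searches_iff)

lemma mem_covered_iff: "w \<in> covered s \<longleftrightarrow> (\<exists>j. (j, w) \<in> search_pairs s)"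
  by (force simp: covered_def)

lemma covered_subset: "covered s \<subseteq> Om"
  by (auto simp: covered_def search_pairs_def)

lemma finite_covered: "finite (covered s)"
  using finite_subset[OF covered_subset finite_locations] .

lemma nonredundantD:
  "nonredundant s \<Longrightarrow> (j, w) \<in> search_pairs s \<Longrightarrow> (k, w) \<in> search_pairs s \<Longrightarrow> j = k"
  unfolding nonredundant_def by (metis inj_onD prod.inject snd_conv)

lemma nonredundant_insert:
  assumes "nonredundant s" "search_pairs s' = insert (i, w) A" "A \<subseteq> search_pairs s" "w \<notin> snd ` A"
  shows "nonredundant s'"
  using assms inj_on_subset[of snd "search_pairs s" A] unfolding nonredundant_def by auto

lemma num_searchers_ge_1_iff: "w \<in> Om \<Longrightarrow> num_searchers N P s w \<ge> 1 \<longleftrightarrow> w \<in> covered s"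
  using finite_players
  by (auto simp: num_searchers_def mem_covered_iff search_pairs_def card_gt_0_iff Suc_le_eq)

lemma nonredundant_iff_num_searchers_le_1:
  "nonredundant s \<longleftrightarrow> (\<forall>w\<in>Om. num_searchers N P s w \<le> 1)"
  using finite_players
  by (auto simp: nonredundant_def inj_on_def num_searchers_def search_pairs_def card_le_Suc0_iff_eq)

lemma redundancy_free_iff:
  "redundancy_free N Om P K s \<longleftrightarrow>
     s \<in> profiles \<and> (\<forall>(i, C)\<in>player_cells. card (s i C) = K i) \<and> nonredundant s"
  by (auto simp: redundancy_free_def player_cells_def nonredundant_iff_num_searchers_le_1)

lemma search_cost_eq:
  "(\<Sum>w\<in>Om. mu w * (\<Sum>j\<in>N. c j (card (s j (cell P j w))))) = search_cost s"
proof -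
  have "(\<Sum>w\<in>Om. mu w * (\<Sum>j\<in>N. c j (card (s j (cell P j w)))))
      = (\<Sum>j\<in>N. \<Sum>w\<in>Om. mu w * c j (card (s j (cell P j w))))"
    by (simp add: sum_distrib_left sum.swap[of _ Om])
  also have "\<dots> = (\<Sum>j\<in>N. \<Sum>D\<in>P j. \<Sum>w\<in>D. mu w * c j (card (s j D)))"
    by (intro sum.cong refl) (simp add: sum_over_cells cell_eqI cong: sum.cong)
  also have "\<dots> = (\<Sum>j\<in>N. \<Sum>D\<in>P j. cell_mass mu D * c j (card (s j D)))"
    by (simp add: cell_mass_def sum_distrib_right)
  also have "\<dots> = search_cost s"
    unfolding search_cost_def player_cells_def
    by (rule sum.Sigma) (auto simp: finite_players finite_partition)
  finally show ?thesis .
qed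

lemma welfare_eq: "welfare s = (\<Sum>w\<in>covered s. mu w * vs w) - search_cost s"
proof -
  have "welfare s = (\<Sum>w\<in>Om. if w \<in> covered s then mu w * vs w else 0)
      - (\<Sum>w\<in>Om. mu w * (\<Sum>j\<in>N. c j (card (s j (cell P j w)))))"
    unfolding U_CI_def sum_subtractf[symmetric]
    by (intro sum.cong refl) (simp add: num_searchers_ge_1_iff[simplified] right_diff_distrib)
  then show ?thesis
    using covered_subset finite_locations
    by (simp add: search_cost_eq sum.If_cases Int_absorb1)
qed

lemma search_pairs_update:
  assumes "i \<in> N" "C \<in> P i" "X \<subseteq> C"
  shows "search_pairs (s(i := (s i)(C := X))) = (search_pairs s - {i} \<times> C) \<union> {i} \<times> X"
  using assms cell_subset[OF assms(1,2)]
  by (auto simp: search_pairs_def searches_def cell_eq_iff cell_eqI split: if_splits)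

lemma search_cost_update:
  assumes "i \<in> N" "C \<in> P i"
  shows "search_cost (s(i := (s i)(C := X)))
       = search_cost s + cell_mass mu C * (c i (card X) - c i (card (s i C)))"
proof -
  have iC: "(i, C) \<in> player_cells" using assms by (simp add: player_cells_def)
  let ?s' = "s(i := (s i)(C := X))"
  let ?cost = "\<lambda>s (j, D). cell_mass mu D * c j (card (s j D))"
  have "sum (?cost ?s') (player_cells - {(i, C)}) = sum (?cost s) (player_cells - {(i, C)})"
    by (rule sum.cong[OF refl]) (auto split: if_splits)
  then show ?thesis
    unfolding search_cost_def sum.remove[OF finite_player_cells iC, of "?cost ?s'"]
      sum.remove[OF finite_player_cells iC, of "?cost s"]
    by (simp add: algebra_simps)
qed

definition add_search :: "('p \<Rightarrow> 'w set \<Rightarrow> 'w set) \<Rightarrow> 'p \<Rightarrow> 'w \<Rightarrow> 'p \<Rightarrow> 'w set \<Rightarrow> 'w set" where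
  "add_search s j w = s(j := (s j)(cell P j w := insert w (s j (cell P j w))))"

definition drop_search :: "('p \<Rightarrow> 'w set \<Rightarrow> 'w set) \<Rightarrow> 'p \<Rightarrow> 'w \<Rightarrow> 'p \<Rightarrow> 'w set \<Rightarrow> 'w set" where
  "drop_search s j w = s(j := (s j)(cell P j w := s j (cell P j w) - {w}))"

context
  fixes s j w
  assumes s: "s \<in> profiles" and j: "j \<in> N" and w: "w \<in> Om"
begin

lemma own_cell: "cell P j w \<in> P j" "w \<in> cell P j w" "s j (cell P j w) \<subseteq> cell P j w"
  using cell_in_partition[OF j w] mem_cell[OF j w] profile_subset[OF s j] by auto

lemma add_search_profile: "card (s j (cell P j w)) < K j \<Longrightarrow> add_search s j w \<in> profiles"
  unfolding add_search_def using own_cell finite_profile[OF s j] card_insert_le_m1[of "K j"]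
  by (intro update_profile[OF s j]) (auto simp: card_insert_if)

lemma drop_search_profile: "drop_search s j w \<in> profiles"
  unfolding drop_search_def using own_cell profile_card_le[OF s j]
  by (intro update_profile[OF s j]) (auto intro: order_trans[OF card_Diff1_le])

lemma search_pairs_add_search: "search_pairs (add_search s j w) = insert (j, w) (search_pairs s)"
proof -
  have sub: "insert w (s j (cell P j w)) \<subseteq> cell P j w" using own_cell by blast
  show ?thesis
    unfolding add_search_def search_pairs_update[OF j own_cell(1) sub]
    using own_cell mem_search_pairs_cell[OF j own_cell(1)] by auto
qed

lemma search_pairs_drop_search: "search_pairs (drop_search s j w) = search_pairs s - {(j, w)}"
proof -
  have sub: "s j (cell P j w) - {w} \<subseteq> cell P j w" using own_cell by blast
  show ?thesis
    unfolding drop_search_def search_pairs_update[OF j own_cell(1) sub]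
    using own_cell mem_search_pairs_cell[OF j own_cell(1)] by auto
qed

lemma search_cost_add_search:
  assumes "(j, w) \<notin> search_pairs s"
  shows "search_cost (add_search s j w) = search_cost s
    + cell_mass mu (cell P j w) * (c j (Suc (card (s j (cell P j w)))) - c j (card (s j (cell P j w))))"
  using assms finite_profile[OF s j own_cell(1)] j w
  by (simp add: add_search_def search_cost_update[OF j own_cell(1)] mem_search_pairs_iff)

lemma search_cost_drop_search:
  assumes "(j, w) \<in> search_pairs s"
  shows "search_cost (drop_search s j w) = search_cost s
    - cell_mass mu (cell P j w) * (c j (card (s j (cell P j w))) - c j (card (s j (cell P j w)) - 1))"
  using assms finite_profile[OF s j own_cell(1)]
  by (simp add: drop_search_def search_cost_update[OF j own_cell(1)] mem_search_pairs_iff algebra_simps)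

end

lemma drop_duplicate_search:
  assumes s: "s \<in> profiles" and redundant: "\<not> nonredundant s"
  obtains s' where "s' \<in> profiles" "search_pairs s' \<subset> search_pairs s" "welfare s \<le> welfare s'"
proof -
  obtain j k w where jw: "(j, w) \<in> search_pairs s" and kw: "(k, w) \<in> search_pairs s" and "j \<noteq> k"
    using redundant unfolding nonredundant_def inj_on_def by fastforce
  then have j: "j \<in> N" and w: "w \<in> Om" and ws: "w \<in> s j (cell P j w)"
    by (auto simp: mem_search_pairs_iff)
  let ?D = "cell P j w"
  let ?s' = "drop_search s j w"
  have pairs': "search_pairs ?s' = search_pairs s - {(j, w)}"
    using search_pairs_drop_search[OF s j w] .
  have "covered ?s' = covered s"
    using kw \<open>j \<noteq> k\<close> unfolding set_eq_iff mem_covered_iff pairs' by blast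
  moreover have "c j (card (s j ?D) - 1) \<le> c j (card (s j ?D))"
    using ws finite_profile[OF s j own_cell(1)[OF s j w]] profile_card_le[OF s j own_cell(1)[OF s j w]]
    by (intro cost_mono[OF j]) (auto simp: card_gt_0_iff)
  then have "search_cost ?s' \<le> search_cost s"
    using search_cost_drop_search[OF s j w jw] cell_mass_pos[OF j own_cell(1)[OF s j w]] by simp
  ultimately have "welfare s \<le> welfare ?s'" by (simp add: welfare_eq)
  moreover have "search_pairs ?s' \<subset> search_pairs s" using pairs' jw by blast
  ultimately show thesis using that drop_search_profile[OF s j w] by blast
qed

lemma welfare_le_nonredundant:
  "s \<in> profiles \<Longrightarrow> \<exists>s'\<in>profiles. nonredundant s' \<and> welfare s \<le> welfare s'"
proof (induction "card (search_pairs s)" arbitrary: s rule: less_induct)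
  case less
  show ?case
  proof (cases "nonredundant s")
    case False
    then obtain s' where "s' \<in> profiles" "search_pairs s' \<subset> search_pairs s" "welfare s \<le> welfare s'"
      using drop_duplicate_search[OF less.prems] by blast
    with less.hyps[of s'] finite_search_pairs show ?thesis
      by (meson order_trans psubset_card_mono)
  qed (use less.prems in auto)
qed

lemma hand_over_search:
  assumes s: "s \<in> profiles" and nr: "nonredundant s" and i: "i \<in> N"
    and jw: "(j, w) \<in> search_pairs s" and "i \<noteq> j" and room: "card (s i (cell P i w)) < K i"
  defines "s' \<equiv> drop_search (add_search s i w) j w"
  shows "s' \<in> profiles" "nonredundant s'" "covered s' = covered s"
    and "search_pairs s' = insert (i, w) (search_pairs s - {(j, w)})"
    and "s' j (cell P j w) = s j (cell P j w) - {w}"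
    and "search_cost s' = search_cost s
      + cell_mass mu (cell P i w) * (c i (Suc (card (s i (cell P i w)))) - c i (card (s i (cell P i w))))
      - cell_mass mu (cell P j w) * (c j (card (s j (cell P j w))) - c j (card (s j (cell P j w)) - 1))"
proof -
  have j: "j \<in> N" and w: "w \<in> Om" using jw by (auto simp: mem_search_pairs_iff)
  have s1: "add_search s i w \<in> profiles" using add_search_profile[OF s i w room] .
  show "s' \<in> profiles" unfolding s'_def using drop_search_profile[OF s1 j w] .
  show pairs': "search_pairs s' = insert (i, w) (search_pairs s - {(j, w)})"
    unfolding s'_def search_pairs_drop_search[OF s1 j w] search_pairs_add_search[OF s i w]
    using \<open>i \<noteq> j\<close> by blast
  have "w \<notin> snd ` (search_pairs s - {(j, w)})" using nonredundantD[OF nr jw] by force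
  then show "nonredundant s'" using nonredundant_insert[OF nr pairs'] by blast
  show "covered s' = covered s"
    using jw unfolding set_eq_iff mem_covered_iff pairs' by blast
  show "s' j (cell P j w) = s j (cell P j w) - {w}"
    using \<open>i \<noteq> j\<close> by (simp add: s'_def add_search_def drop_search_def)
  have "(i, w) \<notin> search_pairs s" using nr jw \<open>i \<noteq> j\<close> by (auto dest: nonredundantD)
  note cost1 = search_cost_add_search[OF s i w this]
  have "(j, w) \<in> search_pairs (add_search s i w)"
    using jw search_pairs_add_search[OF s i w] by blast
  note cost2 = search_cost_drop_search[OF s1 j w this, folded s'_def]
  have "add_search s i w j = s j" using \<open>i \<noteq> j\<close> by (simp add: add_search_def)
  with cost1 cost2 show "search_cost s' = search_cost s
      + cell_mass mu (cell P i w) * (c i (Suc (card (s i (cell P i w)))) - c i (card (s i (cell P i w))))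
      - cell_mass mu (cell P j w) * (c j (card (s j (cell P j w))) - c j (card (s j (cell P j w)) - 1))"
    by simp
qed

lemma add_uncovered_search:
  assumes s: "s \<in> profiles" and nr: "nonredundant s" and i: "i \<in> N"
    and w: "w \<in> Om" "w \<notin> covered s"
  shows "nonredundant (add_search s i w)" "covered (add_search s i w) = insert w (covered s)"
  using nonredundant_insert[OF nr search_pairs_add_search[OF s i w(1)]] w(2)
  by (simp_all add: covered_def search_pairs_add_search[OF s i w(1)])

lemma missing_search:
  assumes r: "redundancy_free N Om P K r" and s: "s \<in> profiles" and i: "i \<in> N" and C: "C \<in> P i"
    and room: "card (s i C) < K i"
  obtains w where "w \<in> C" "(i, w) \<in> search_pairs r" "(i, w) \<notin> search_pairs s"
proof -
  have r_profile: "r \<in> profiles" and r_full: "card (r i C) = K i"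
    using r i C by (auto simp: redundancy_free_iff player_cells_def)
  have "\<not> r i C \<subseteq> s i C"
  proof
    assume "r i C \<subseteq> s i C"
    then have "card (r i C) \<le> card (s i C)" by (rule card_mono[OF finite_profile[OF s i C]])
    with room r_full show False by simp
  qed
  then obtain w where "w \<in> r i C" "w \<notin> s i C" by blast
  moreover have "w \<in> C" using \<open>w \<in> r i C\<close> profile_subset[OF r_profile i C] by blast
  ultimately show thesis using that mem_search_pairs_cell[OF i C] by blast
qed

lemma extend_search:
  assumes r: "redundancy_free N Om P K r"
  shows "s \<in> profiles \<Longrightarrow> nonredundant s \<Longrightarrow> i \<in> N \<Longrightarrow> C \<in> P i \<Longrightarrow> card (s i C) < K i \<Longrightarrow>
    \<exists>s'\<in>profiles. nonredundant s' \<and> (\<exists>w\<in>Om - covered s. covered s' = insert w (covered s)) \<and>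
      search_cost s' = search_cost s + cell_mass mu C * (c i (Suc (card (s i C))) - c i (card (s i C)))"
proof (induction "card (search_pairs r - search_pairs s)" arbitrary: s i C rule: less_induct)
  case (less s i C)
  note s = less.prems(1) and nr = less.prems(2) and i = less.prems(3) and C = less.prems(4)
    and room = less.prems(5)
  obtain w where wC: "w \<in> C" and iw_r: "(i, w) \<in> search_pairs r" and iw_s: "(i, w) \<notin> search_pairs s"
    using missing_search[OF r s i C room] .
  have w: "w \<in> Om" and cell_w: "cell P i w = C"
    using wC cell_subset[OF i C] cell_eqI[OF i C] by auto
  show ?case
  proof (cases "w \<in> covered s")
    case False
    then show ?thesis
      using add_search_profile[OF s i w] add_uncovered_search[OF s nr i w False]
        search_cost_add_search[OF s i w iw_s] room w cell_w by auto
  next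
    case True
    then obtain j where jw: "(j, w) \<in> search_pairs s" by (auto simp: mem_covered_iff)
    have "i \<noteq> j" using jw iw_s by auto
    have j: "j \<in> N" and D: "cell P j w \<in> P j" "w \<in> s j (cell P j w)"
      using jw own_cell[OF s _ w] by (auto simp: mem_search_pairs_iff)
    define s2 where "s2 = drop_search (add_search s i w) j w"
    note s2 = hand_over_search[OF s nr i jw \<open>i \<noteq> j\<close>, folded s2_def, unfolded cell_w, OF room]
    \<comment> \<open>The hand-over gains the pair (i, w) of r and loses (j, w), which is not in r.\<close>
    have "(j, w) \<notin> search_pairs r" using nonredundantD[of r] r iw_r \<open>i \<noteq> j\<close>
      by (auto simp: redundancy_free_iff)
    then have "search_pairs r - search_pairs s2 \<subset> search_pairs r - search_pairs s"
      using s2(4) iw_r iw_s by blast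
    then have smaller: "card (search_pairs r - search_pairs s2) < card (search_pairs r - search_pairs s)"
      by (meson finite_Diff finite_search_pairs psubset_card_mono)
    have pos: "0 < card (s j (cell P j w))"
      using D finite_profile[OF s j D(1)] by (auto simp: card_gt_0_iff)
    then have "card (s2 j (cell P j w)) < K j"
      using s2(5) profile_card_le[OF s j D(1)] finite_profile[OF s j D(1)] D by simp
    from less.hyps[OF smaller s2(1,2) j D(1) this] obtain s3 where
      "s3 \<in> profiles" "nonredundant s3" "\<exists>w\<in>Om - covered s2. covered s3 = insert w (covered s2)"
      and cost3: "search_cost s3 = search_cost s2 + cell_mass mu (cell P j w)
          * (c j (Suc (card (s2 j (cell P j w)))) - c j (card (s2 j (cell P j w))))"
      by blast
    moreover have "search_cost s3
        = search_cost s + cell_mass mu C * (c i (Suc (card (s i C))) - c i (card (s i C)))"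
      using cost3 s2(5,6) pos finite_profile[OF s j D(1)] D by simp
    ultimately show ?thesis using s2(3) by auto
  qed
qed

lemma nonredundant_welfare_le_redundancy_free:
  assumes soc: "social_value_outweighs_cost N Om P mu K c vs" and r: "redundancy_free N Om P K r"
  shows "s \<in> profiles \<Longrightarrow> nonredundant s \<Longrightarrow> \<exists>r'. redundancy_free N Om P K r' \<and> welfare s \<le> welfare r'"
proof (induction "card (Om - covered s)" arbitrary: s rule: less_induct)
  case (less s)
  show ?case
  proof (cases "\<forall>(i, C)\<in>player_cells. card (s i C) = K i")
    case False
    then obtain i C where i: "i \<in> N" and C: "C \<in> P i" and room: "card (s i C) < K i"
      using profile_card_le[OF less.prems(1)] by (force simp: player_cells_def le_less)
    obtain s' w where s': "s' \<in> profiles" "nonredundant s'" and w: "w \<in> Om" "w \<notin> covered s"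
      and covered': "covered s' = insert w (covered s)"
      and cost': "search_cost s' = search_cost s + cell_mass mu C * (c i (Suc (card (s i C))) - c i (card (s i C)))"
      using extend_search[OF r less.prems i C room] by blast
    have "cell_mass mu C * (c i (Suc (card (s i C))) - c i (card (s i C)))
        \<le> cell_mass mu C * (c i (K i) - c i (K i - 1))"
      using marginal_cost_le_last[OF i room] cell_mass_pos[OF i C] by simp
    also have "\<dots> \<le> mu w * vs w"
      using soc w i C by (simp add: social_value_outweighs_cost_def)
    finally have "welfare s \<le> welfare s'"
      using w finite_covered by (simp add: welfare_eq covered' cost')
    moreover have "card (Om - covered s') < card (Om - covered s)"
      using w finite_locations by (intro psubset_card_mono) (auto simp: covered')
    ultimately show ?thesis using less.hyps s' by fastforce
  qed (use less.prems in \<open>auto simp: redundancy_free_iff\<close>)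
qed

lemma welfare_le_redundancy_free:
  assumes "social_value_outweighs_cost N Om P mu K c vs" and "redundancy_free N Om P K r"
    and "s \<in> profiles"
  shows "\<exists>r'. redundancy_free N Om P K r' \<and> welfare s \<le> welfare r'"
  using welfare_le_nonredundant[OF assms(3)]
    nonredundant_welfare_le_redundancy_free[OF assms(1,2)] by (meson order_trans)

definition solo_value :: "('p \<Rightarrow> 'w set \<Rightarrow> 'w set) \<Rightarrow> real" where
  "solo_value s = (\<Sum>(j, w)\<in>search_pairs s. mu w * v j 1 w)"

definition swap_stable :: "('p \<Rightarrow> 'w set \<Rightarrow> 'w set) \<Rightarrow> bool" where
  "swap_stable r \<longleftrightarrow>
     (\<forall>i\<in>N. \<forall>C\<in>P i. \<forall>x\<in>r i C. \<forall>y\<in>C - covered r. mu y * v i 1 y \<le> mu x * v i 1 x)"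

lemma swap_search:
  assumes r: "r \<in> profiles" and i: "i \<in> N" and C: "C \<in> P i"
    and x: "x \<in> r i C" and y: "y \<in> C - r i C"
  defines "r' \<equiv> add_search (drop_search r i x) i y"
  shows "r' \<in> profiles" "search_pairs r' = insert (i, y) (search_pairs r - {(i, x)})"
    and "search_cost r' = search_cost r" "card (r' j D) = card (r j D)"
proof -
  have xC: "x \<in> C" using x profile_subset[OF r i C] by blast
  have x_om: "x \<in> Om" and y_om: "y \<in> Om" using xC y cell_subset[OF i C] by auto
  have cells: "cell P i x = C" "cell P i y = C" using xC y cell_eqI[OF i C] by auto
  have fin: "finite (r i C)" using finite_profile[OF r i C] .
  have r1: "drop_search r i x \<in> profiles" using drop_search_profile[OF r i x_om] .
  have r1_C: "drop_search r i x i C = r i C - {x}" by (simp add: drop_search_def cells)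
  have pos: "0 < card (r i C)" using x fin by (auto simp: card_gt_0_iff)
  then have room: "card (drop_search r i x i (cell P i y)) < K i"
    using fin x profile_card_le[OF r i C] by (simp add: r1_C cells)
  show "r' \<in> profiles" unfolding r'_def using add_search_profile[OF r1 i y_om room] .
  show "search_pairs r' = insert (i, y) (search_pairs r - {(i, x)})"
    unfolding r'_def search_pairs_add_search[OF r1 i y_om] search_pairs_drop_search[OF r i x_om] ..
  have "(i, x) \<in> search_pairs r" "(i, y) \<notin> search_pairs (drop_search r i x)"
    using x xC y r1_C mem_search_pairs_cell[OF i C] by auto
  with search_cost_drop_search[OF r i x_om] search_cost_add_search[OF r1 i y_om]
  show "search_cost r' = search_cost r"
    using pos fin x by (simp add: r'_def r1_C cells)
  show "card (r' j D) = card (r j D)"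
    using fin x y pos by (simp add: r'_def add_search_def drop_search_def cells card_insert_if)
qed

lemma swap_stable_if_lex_max:
  assumes oc: "ordinally_consistent N P mu v vs" and r: "redundancy_free N Om P K r"
    and lex_max: "\<And>r'. redundancy_free N Om P K r'
      \<Longrightarrow> (welfare r', solo_value r') \<le> (welfare r, solo_value r)"
  shows "swap_stable r"
  unfolding swap_stable_def
proof (intro ballI, rule ccontr)
  fix i C x y
  assume i: "i \<in> N" and C: "C \<in> P i" and x: "x \<in> r i C" and y: "y \<in> C - covered r"
    and "\<not> mu y * v i 1 y \<le> mu x * v i 1 x"
  then have gain: "mu x * v i 1 x < mu y * v i 1 y" by simp
  have r_profile: "r \<in> profiles" and rnr: "nonredundant r"
    and r_full: "\<forall>(j, D)\<in>player_cells. card (r j D) = K j"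
    using r by (auto simp: redundancy_free_iff)
  have xC: "x \<in> C" using x profile_subset[OF r_profile i C] by blast
  have ix: "(i, x) \<in> search_pairs r" using x xC mem_search_pairs_cell[OF i C] by blast
  have "y \<notin> r i C" using y ix mem_search_pairs_cell[OF i C] by (auto simp: mem_covered_iff)
  define r' where "r' = add_search (drop_search r i x) i y"
  note swap = swap_search[OF r_profile i C x, of y, folded r'_def]
  have pairs': "search_pairs r' = insert (i, y) (search_pairs r - {(i, x)})"
    using swap(2) y \<open>y \<notin> r i C\<close> by blast
  have "y \<notin> snd ` (search_pairs r - {(i, x)})" using y by (auto simp: covered_def)
  then have "nonredundant r'" using nonredundant_insert[OF rnr pairs'] by blast
  then have rf': "redundancy_free N Om P K r'"
    using swap y \<open>y \<notin> r i C\<close> r_full by (simp add: redundancy_free_iff)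
  have "covered r' = insert y (covered r - {x})"
    using ix rnr by (auto simp: mem_covered_iff pairs' dest: nonredundantD)
  moreover have "x \<in> covered r" using ix by (auto simp: mem_covered_iff)
  moreover have "mu x * vs x \<le> mu y * vs y"
    using oc i C xC y gain unfolding ordinally_consistent_def by blast
  ultimately have "welfare r \<le> welfare r'"
    using y finite_covered swap(3) y \<open>y \<notin> r i C\<close> by (simp add: welfare_eq sum_diff1)
  moreover have "solo_value r' = solo_value r + mu y * v i 1 y - mu x * v i 1 x"
    using ix y finite_search_pairs by (simp add: solo_value_def pairs' sum_diff1 mem_covered_iff)
  ultimately have "(welfare r, solo_value r) < (welfare r', solo_value r')"
    using gain by auto
  with lex_max[OF rf'] show False by (meson leD)
qed

lemma solitary_search_dominantD:
  assumes "solitary_search_dominant N P mu K c v" "i \<in> N" "C \<in> P i" "x \<in> C" "y \<in> C"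
  shows "mu y * v i 2 y \<le> mu x * v i 1 x"
    and "cell_mass mu C * (c i (K i) - c i (K i - 1)) \<le> mu x * v i 1 x"
proof -
  have m: "cell_mass mu C > 0" using cell_mass_pos[OF assms(2,3)] .
  have "mu y / cell_mass mu C * v i 2 y \<le> mu x / cell_mass mu C * v i 1 x"
    and "c i (K i) - c i (K i - 1) \<le> mu x / cell_mass mu C * v i 1 x"
    using assms unfolding solitary_search_dominant_def by blast+
  then show "mu y * v i 2 y \<le> mu x * v i 1 x"
    and "cell_mass mu C * (c i (K i) - c i (K i - 1)) \<le> mu x * v i 1 x"
    using m by (simp_all add: field_simps)
qed

lemma cell_payoff_eq:
  assumes i: "i \<in> N" and C: "C \<in> P i" and sub: "s i C \<subseteq> C"
  shows "(\<Sum>w\<in>C. mu w * ((if searches P s i w then v i (num_searchers N P s w) w else 0)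
          - c i (card (s i (cell P i w)))))
    = (\<Sum>w\<in>s i C. mu w * v i (num_searchers N P s w) w) - cell_mass mu C * c i (card (s i C))"
proof -
  have "(\<Sum>w\<in>C. mu w * ((if searches P s i w then v i (num_searchers N P s w) w else 0)
          - c i (card (s i (cell P i w)))))
      = (\<Sum>w\<in>C. if w \<in> s i C then mu w * v i (num_searchers N P s w) w else 0)
          - (\<Sum>w\<in>C. mu w * c i (card (s i C)))"
    unfolding sum_subtractf[symmetric]
    by (intro sum.cong refl) (simp add: searches_iff[OF i C] cell_eqI[OF i C] right_diff_distrib)
  also have "\<dots> = (\<Sum>w\<in>s i C. mu w * v i (num_searchers N P s w) w) - cell_mass mu C * c i (card (s i C))"
    using finite_cell[OF i C] sub by (simp add: sum.If_cases Int_absorb1 cell_mass_def sum_distrib_right)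
  finally show ?thesis .
qed

lemma payoff_eq:
  assumes i: "i \<in> N" and sub: "\<And>C. C \<in> P i \<Longrightarrow> s i C \<subseteq> C"
  shows "payoff N Om P mu c v i s = (\<Sum>C\<in>P i.
    (\<Sum>w\<in>s i C. mu w * v i (num_searchers N P s w) w) - cell_mass mu C * c i (card (s i C)))"
  unfolding payoff_def sum_over_cells[OF i]
  by (rule sum.cong[OF refl]) (simp add: cell_payoff_eq[OF i] sub)

lemma num_searchers_deviation:
  assumes nr: "nonredundant r" and i: "i \<in> N" and C: "C \<in> P i" and y: "y \<in> t C" "t C \<subseteq> C"
  shows "num_searchers N P (r(i := t)) y = (if y \<in> covered r \<and> y \<notin> r i C then 2 else 1)"
proof -
  have yC: "y \<in> C" and y_om: "y \<in> Om" using y cell_subset[OF i C] by auto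
  let ?others = "{j. (j, y) \<in> search_pairs r \<and> j \<noteq> i}"
  have searchers: "{j \<in> N. searches P (r(i := t)) j y} = insert i ?others"
    using i y yC y_om by (auto simp: searches_def search_pairs_def cell_eqI[OF i C])
  have own: "(i, y) \<in> search_pairs r \<longleftrightarrow> y \<in> r i C"
    using mem_search_pairs_cell[OF i C yC] .
  show ?thesis
  proof (cases "y \<in> covered r \<and> y \<notin> r i C")
    case True
    then obtain k where k: "(k, y) \<in> search_pairs r" by (auto simp: mem_covered_iff)
    moreover have "k \<noteq> i" using True own k by auto
    ultimately have others: "?others = {k}" and "k \<noteq> i" using nonredundantD[OF nr k] by blast+
    then show ?thesis unfolding num_searchers_def searchers others using True by simp
  next
    case False
    then have others: "?others = {}"
      using own nonredundantD[OF nr] unfolding mem_covered_iff by blast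
    show ?thesis unfolding num_searchers_def searchers others using False by simp
  qed
qed

lemma deviation_value_le:
  assumes ssd: "solitary_search_dominant N P mu K c v" and stable: "swap_stable r"
    and r: "r \<in> profiles" and i: "i \<in> N" and C: "C \<in> P i"
    and x: "x \<in> r i C" and y: "y \<in> C - r i C"
  shows "mu y * v i (if y \<in> covered r then 2 else 1) y \<le> mu x * v i 1 x"
proof (cases "y \<in> covered r")
  case True
  then show ?thesis
    using solitary_search_dominantD(1)[OF ssd i C] x y profile_subset[OF r i C] by auto
next
  case False
  then show ?thesis using stable i C x y unfolding swap_stable_def by auto
qed

lemma deviation_cell_payoff_le:
  assumes ssd: "solitary_search_dominant N P mu K c v" and r: "redundancy_free N Om P K r"
    and stable: "swap_stable r" and i: "i \<in> N" and C: "C \<in> P i" and t: "pure_strategy P K i t"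
  shows "(\<Sum>y\<in>t C. mu y * v i (num_searchers N P (r(i := t)) y) y) - cell_mass mu C * c i (card (t C))
       \<le> (\<Sum>x\<in>r i C. mu x * v i (num_searchers N P r x) x) - cell_mass mu C * c i (card (r i C))"
proof -
  have r_profile: "r \<in> profiles" and nr: "nonredundant r" and r_full: "card (r i C) = K i"
    using r i C by (auto simp: redundancy_free_iff player_cells_def)
  have rC: "r i C \<subseteq> C" using profile_subset[OF r_profile i C] .
  have tC: "t C \<subseteq> C" "card (t C) \<le> K i" using t C by (auto simp: pure_strategy_def)
  have num_t: "num_searchers N P (r(i := t)) y = (if y \<in> covered r \<and> y \<notin> r i C then 2 else 1)"
    if "y \<in> t C" for y
    using num_searchers_deviation[of r i C y t] nr i C that tC(1) by blast
  have num_r: "num_searchers N P r x = 1" if "x \<in> r i C" for x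
    using num_searchers_deviation[of r i C x "r i"] nr i C that rC by simp
  have "(\<Sum>y\<in>t C. mu y * v i (num_searchers N P (r(i := t)) y) y) - cell_mass mu C * c i (card (t C))
      \<le> (\<Sum>x\<in>r i C. mu x * v i 1 x) - cell_mass mu C * c i (card (r i C))"
  proof (rule exchange_sum_le[where d = "cell_mass mu C * (c i (K i) - c i (K i - 1))"])
    show "finite (r i C)" "finite (t C)"
      using finite_profile[OF r_profile i C] finite_subset[OF tC(1) finite_cell[OF i C]] by auto
    show "card (t C) \<le> card (r i C)" using tC r_full by simp
    show "mu y * v i (num_searchers N P (r(i := t)) y) y = mu y * v i 1 y" if "y \<in> t C \<inter> r i C" for y
      using that num_t by simp
    show "mu y * v i (num_searchers N P (r(i := t)) y) y \<le> mu x * v i 1 x"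
      if "x \<in> r i C" and "y \<in> t C - r i C" for x y
      using deviation_value_le[OF ssd stable r_profile i C, of x y] num_t that tC by auto
    show "cell_mass mu C * (c i (K i) - c i (K i - 1)) \<le> mu x * v i 1 x" if "x \<in> r i C" for x
      using solitary_search_dominantD(2)[OF ssd i C] that rC by blast
    have "cell_mass mu C * (c i (K i) - c i (card (t C)))
        \<le> cell_mass mu C * (real (K i - card (t C)) * (c i (K i) - c i (K i - 1)))"
      using cost_diff_le_last_marginal[OF i tC(2)] cell_mass_pos[OF i C] by (simp add: mult_left_mono)
    then show "cell_mass mu C * c i (card (r i C)) - cell_mass mu C * c i (card (t C))
        \<le> real (card (r i C) - card (t C)) * (cell_mass mu C * (c i (K i) - c i (K i - 1)))"
      using r_full by (simp add: algebra_simps)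
  qed
  then show ?thesis using num_r by simp
qed

lemma pure_nash_if_swap_stable:
  assumes ssd: "solitary_search_dominant N P mu K c v" and r: "redundancy_free N Om P K r"
    and stable: "swap_stable r"
  shows "pure_nash N Om P mu K c v r"
  unfolding pure_nash_def
proof (intro conjI ballI allI impI)
  show r_profile: "r \<in> profiles" using r by (simp add: redundancy_free_def)
  fix i t assume i: "i \<in> N" and t: "pure_strategy P K i t"
  have "payoff N Om P mu c v i (r(i := t)) = (\<Sum>C\<in>P i.
      (\<Sum>y\<in>t C. mu y * v i (num_searchers N P (r(i := t)) y) y) - cell_mass mu C * c i (card (t C)))"
    using payoff_eq[OF i, of "r(i := t)"] t by (simp add: pure_strategy_def)
  also have "\<dots> \<le> (\<Sum>C\<in>P i.
      (\<Sum>x\<in>r i C. mu x * v i (num_searchers N P r x) x) - cell_mass mu C * c i (card (r i C)))"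
    by (intro sum_mono deviation_cell_payoff_le[OF ssd r stable i _ t])
  also have "\<dots> = payoff N Om P mu c v i r"
    using payoff_eq[OF i, of r] profile_subset[OF r_profile i] by simp
  finally show "payoff N Om P mu c v i (r(i := t)) \<le> payoff N Om P mu c v i r" .
qed

lemma exists_lex_max_redundancy_free:
  assumes "\<exists>s. redundancy_free N Om P K s"
  obtains r where "redundancy_free N Om P K r"
    and "\<And>r'. redundancy_free N Om P K r' \<Longrightarrow> (welfare r', solo_value r') \<le> (welfare r, solo_value r)"
proof -
  let ?RF = "{s. redundancy_free N Om P K s}"
  let ?f = "\<lambda>s. (welfare s, solo_value s)"
  have "?RF \<subseteq> profiles" by (auto simp: redundancy_free_def)
  then have fin: "finite (?f ` ?RF)" using finite_subset[OF _ finite_profiles] by blast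
  have "?f ` ?RF \<noteq> {}" using assms by blast
  then obtain r where r: "r \<in> ?RF" and max: "?f r = Max (?f ` ?RF)"
    using Max_in[OF fin] by (metis (no_types, lifting) imageE)
  show thesis
  proof (rule that)
    show "redundancy_free N Om P K r" using r by simp
    show "?f r' \<le> ?f r" if "redundancy_free N Om P K r'" for r'
      unfolding max using Max_ge[OF fin] that by blast
  qed
qed

end

theorem proposition3:
  fixes N :: "'p set" and Om :: "'w set" and P :: "'p \<Rightarrow> 'w set set"
    and mu :: "'w \<Rightarrow> real" and K :: "'p \<Rightarrow> nat" and c :: "'p \<Rightarrow> nat \<Rightarrow> real"
    and v :: "'p \<Rightarrow> nat \<Rightarrow> 'w \<Rightarrow> real" and vs :: "'w \<Rightarrow> real"
  assumes "search_game N Om P mu K c v vs"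
    and "ordinally_consistent N P mu v vs"
    and "solitary_search_dominant N P mu K c v"
    and "social_value_outweighs_cost N Om P mu K c vs"
    and "\<exists>s. redundancy_free N Om P K s"
  shows "\<exists>s\<in>pure_profiles N P K. pure_nash N Om P mu K c v s \<and>
           (\<forall>s'\<in>pure_profiles N P K. U_CI N Om P mu c vs s' \<le> U_CI N Om P mu c vs s)"
proof -
  interpret search_game_context N Om P mu K c v vs using assms(1) by (rule search_game_context.intro)
  obtain r where r: "redundancy_free N Om P K r"
    and lex_max: "\<And>r'. redundancy_free N Om P K r'
      \<Longrightarrow> (welfare r', solo_value r') \<le> (welfare r, solo_value r)"
    using exists_lex_max_redundancy_free[OF assms(5)] by blast
  have "pure_nash N Om P mu K c v r"
    using pure_nash_if_swap_stable[OF assms(3) r swap_stable_if_lex_max[OF assms(2) r lex_max]] .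
  moreover have "welfare s \<le> welfare r" if s: "s \<in> profiles" for s
  proof -
    obtain r' where "redundancy_free N Om P K r'" "welfare s \<le> welfare r'"
      using welfare_le_redundancy_free[OF assms(4) r s] by blast
    with lex_max show ?thesis by fastforce
  qed
  ultimately show ?thesis using r by (auto simp: redundancy_free_def)
qed

end
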